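(* Let $S$ be a set, $x\in\mathbb{R}$, and $f:\mathbb{R}\to S$ a scenario that is past-affine-invariant on $(-\infty,x)$. Then there is an affine-invariant scenario $g:\mathbb{R}\to S$ such that $f\upharpoonright(-\infty,x)=g\upharpoonright(-\infty,x)$.
   Context: A scenario is a function $f:\mathbb{R}\to S$ for an arbitrary set $S$. Let $T_2$ be the set of all functions $t:\mathbb{R}\to\mathbb{R}$ of the form $t(y)=ay+c$ with $a>0$, $c\in\mathbb{R}$. A scenario $f$ is affine-invariant if there is some $t\in T_2$, not the identity, with $f=f\circ t$. A scenario $f$ is past-affine-invariant on $(-\infty,x)$ if there is a non-identity $t\in T_2$ with $f\upharpoonright(-\infty,x)=(f\circ t)\upharpoonright(-\infty,x)$. *)

theory Defs
  imports Main "HOL.Real"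
begin

definition T2 :: "(real \<Rightarrow> real) set" where
  "T2 = {t. \<exists>a c. a > 0 \<and> t = (\<lambda>y. a * y + c)}"

definition affine_invariant :: "(real \<Rightarrow> 's) \<Rightarrow> bool" where
  "affine_invariant f \<longleftrightarrow> (\<exists>t\<in>T2. t \<noteq> id \<and> f = f \<circ> t)"

definition past_affine_invariant :: "(real \<Rightarrow> 's) \<Rightarrow> real \<Rightarrow> bool" where
  "past_affine_invariant f x \<longleftrightarrow>
     (\<exists>t\<in>T2. t \<noteq> id \<and> (\<forall>y. y < x \<longrightarrow> f y = (f \<circ> t) y))"

end

theory Submission
  imports Defs
begin

text \<open>Write the invariance as \<open>f = f \<circ> t\<close> on \<open>A = (-\<infinity>, x)\<close>. Either \<open>t\<close> or its
  inverse (which inherits the invariance) maps \<open>A\<close> into itself; call it \<open>u\<close>. Every point whose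
  \<open>u\<close>-orbit enters \<open>A\<close> gets the value of \<open>f\<close> at any orbit point in \<open>A\<close>, which is well defined
  because \<open>f\<close> is constant along orbits inside \<open>A\<close>.\<close>

lemma funpow_invariant_on:
  assumes into: "\<And>z. z \<in> A \<Longrightarrow> u z \<in> A"
    and inv: "\<And>z. z \<in> A \<Longrightarrow> f (u z) = f z"
    and "z \<in> A"
  shows "(u ^^ n) z \<in> A \<and> f ((u ^^ n) z) = f z"
  using \<open>z \<in> A\<close> by (induction n) (auto simp: into inv)

lemma funpow_orbit_value_unique:
  assumes into: "\<And>z. z \<in> A \<Longrightarrow> u z \<in> A"
    and inv: "\<And>z. z \<in> A \<Longrightarrow> f (u z) = f z"
    and "(u ^^ n) y \<in> A" and "(u ^^ m) y \<in> A"
  shows "f ((u ^^ n) y) = f ((u ^^ m) y)"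
proof -
  have later: "f ((u ^^ l) y) = f ((u ^^ k) y)" if "k \<le> l" "(u ^^ k) y \<in> A" for k l
  proof -
    have "(u ^^ l) y = (u ^^ (l - k)) ((u ^^ k) y)"
      using \<open>k \<le> l\<close> by (metis funpow_add le_add_diff_inverse2 o_apply)
    then show ?thesis
      using funpow_invariant_on[where A = A and u = u and f = f, OF into inv \<open>(u ^^ k) y \<in> A\<close>]
      by simp
  qed
  show ?thesis
    using later[of n m] later[of m n] assms(3,4) by (cases "n \<le> m") auto
qed

lemma invariant_extension:
  fixes f :: "'a \<Rightarrow> 'b"
  assumes into: "\<And>z. z \<in> A \<Longrightarrow> u z \<in> A"
    and inv: "\<And>z. z \<in> A \<Longrightarrow> f (u z) = f z"
  obtains g where "g = g \<circ> u" and "\<And>y. y \<in> A \<Longrightarrow> g y = f y"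
proof -
  define g where
    "g y = (if \<exists>n. (u ^^ n) y \<in> A then f ((u ^^ (SOME n. (u ^^ n) y \<in> A)) y) else undefined)"
    for y
  have g_orbit: "g y = f ((u ^^ n) y)" if "(u ^^ n) y \<in> A" for y n
  proof -
    have ex: "\<exists>n. (u ^^ n) y \<in> A" using that by blast
    show ?thesis
      unfolding g_def
      using ex someI_ex[OF ex] funpow_orbit_value_unique[where A = A and u = u and f = f, OF into inv _ that] by auto
  qed
  have "g (u y) = g y" for y
  proof (cases "\<exists>n. (u ^^ n) y \<in> A")
    case True
    then obtain n where n: "(u ^^ n) y \<in> A" by blast
    have "(u ^^ n) (u y) = u ((u ^^ n) y)" by (simp add: funpow_swap1)
    moreover have "u ((u ^^ n) y) \<in> A" using into n .
    ultimately have "g (u y) = f (u ((u ^^ n) y))" using g_orbit by metis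
    also have "\<dots> = g y" using inv n g_orbit by simp
    finally show ?thesis .
  next
    case False
    then have "\<not> (\<exists>n. (u ^^ n) (u y) \<in> A)"
      by (metis funpow_simps_right(2) o_apply)
    with False show ?thesis unfolding g_def by simp
  qed
  then show ?thesis
    using that[of g] g_orbit[where n = 0] by (simp add: fun_eq_iff)
qed

lemma T2_inverse:
  assumes "t \<in> T2"
  obtains u where "u \<in> T2" and "\<And>z. t (u z) = z"
proof -
  obtain a c where "a > 0" and t: "t = (\<lambda>y. a * y + c)"
    using assms unfolding T2_def by auto
  show ?thesis
  proof (rule that[of "\<lambda>y. (1 / a) * y + (- c / a)"])
    show "(\<lambda>y. (1 / a) * y + (- c / a)) \<in> T2"
      unfolding T2_def using \<open>a > 0\<close> by (intro CollectI exI[of _ "1 / a"] exI[of _ "- c / a"]) auto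
  qed (use \<open>a > 0\<close> in \<open>auto simp: t field_simps\<close>)
qed

lemma T2_self_map_below:
  assumes "t \<in> T2" and "\<And>z. t (u z) = z"
  shows "(\<forall>z<x. t z < x) \<or> (\<forall>z<x. u z < x)"
proof -
  obtain a c where "a > 0" and t: "t = (\<lambda>y. a * y + c)"
    using assms(1) unfolding T2_def by auto
  have t_less_iff: "t y < t z \<longleftrightarrow> y < z" for y z
    using \<open>a > 0\<close> by (simp add: t)
  show ?thesis
  proof (cases "t x \<le> x")
    case True
    then show ?thesis using t_less_iff by (meson less_le_trans)
  next
    case False
    then show ?thesis using t_less_iff assms(2) by (metis less_trans not_le)
  qed
qed

theorem lemma2:
  fixes f :: "real \<Rightarrow> 's" and x :: real
  assumes "past_affine_invariant f x"
  shows "\<exists>g :: real \<Rightarrow> 's. affine_invariant g \<and> (\<forall>y. y < x \<longrightarrow> f y = g y)"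
proof -
  obtain t where "t \<in> T2" "t \<noteq> id" and ft: "\<And>y. y < x \<Longrightarrow> f (t y) = f y"
    using assms unfolding past_affine_invariant_def by auto
  obtain s where "s \<in> T2" and ts: "\<And>z. t (s z) = z"
    using T2_inverse[OF \<open>t \<in> T2\<close>] by blast
  have "s \<noteq> id" using ts \<open>t \<noteq> id\<close> by (metis eq_id_iff)
  have "\<exists>u\<in>T2. u \<noteq> id \<and> (\<forall>z<x. u z < x \<and> f (u z) = f z)"
  proof (cases "\<forall>z<x. t z < x")
    case True
    then show ?thesis using \<open>t \<in> T2\<close> \<open>t \<noteq> id\<close> ft by blast
  next
    case False
    then have "\<forall>z<x. s z < x" using T2_self_map_below[OF \<open>t \<in> T2\<close> ts] by blast
    moreover have "f (s z) = f z" if "s z < x" for z using ft[OF that] ts by simp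
    ultimately show ?thesis using \<open>s \<in> T2\<close> \<open>s \<noteq> id\<close> by blast
  qed
  then obtain u where "u \<in> T2" "u \<noteq> id" and into: "\<And>z. z < x \<Longrightarrow> u z < x"
    and inv: "\<And>z. z < x \<Longrightarrow> f (u z) = f z"
    by blast
  obtain g where "g = g \<circ> u" and "\<And>y. y < x \<Longrightarrow> g y = f y"
    using invariant_extension[of "{..<x}" u f] into inv by auto
  then show ?thesis
    unfolding affine_invariant_def using \<open>u \<in> T2\<close> \<open>u \<noteq> id\<close> by metis
qed

end
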